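(* Let $\mathbb{G}$ be a unicellular fatgraph, let $\tilde{\mathbb{G}}$ be obtained from $\mathbb{G}$ by an $i,j$-reversal, and let $r$ be a ribbon of $\mathbb{G}$ (identified with the corresponding ribbon of $\tilde{\mathbb{G}}$). Then $r$ changes its directional status (m-ribbon versus b-ribbon) under the reversal if and only if $r$ intersects the interval $[i,j]_\gamma$.
   Context: A (rooted) fatgraph with $n$ ribbons is $\mathbb{G}=([2n+1],\sigma,\gamma,\omega)$: sectors $[2n+1]$; permutations $\sigma,\gamma$ whose cycles are vertices and boundary components, $\sigma(2n+1)=\gamma(2n+1)=1$; orientations $\omega:[2n+1]\to\{\pm1\}$ with $\omega(1)=\omega(2n+1)$. The pairs $(x,\sigma(x))$, $x\ne 2n+1$, are matched into ribbons $((x,\sigma(x)),(y,\sigma(y)))$, either untwisted ($x,\sigma(y)$ and $\sigma(x),y$ $\gamma$-consecutive, $\omega(x)=\omega(\sigma(y))$, $\omega(\sigma(x))=\omega(y)$) or twisted ($x,y$ and $\sigma(x),\sigma(y)$ $\gamma$-consecutive, $\omega(x)=-\omega(y)$, $\omega(\sigma(x))=-\omega(\sigma(y))$). An m-ribbon has $\omega(x)=-\omega(\sigma(x))$, $\omega(y)=-\omega(\sigma(y))$; a b-ribbon has $\omega(x)=\omega(\sigma(x))$, $\omega(y)=\omega(\sigma(y))$. Flipping a vertex reverses its cyclic order and negates its sectors' orientations. Unicellular: $\gamma=(1,\dots,2n+1)$, with order $<_\gamma$ given by $1<\dots<2n+1$; $[i,j]_\gamma=\{s: i\le_\gamma s\le_\gamma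 j\}$. For a ribbon $r$, $r^L,r^R$ are the $<_\gamma$-min and max of its four sectors. A ribbon $r$ intersects $[i,j]_\gamma$ if $r^L<_\gamma i<_\gamma r^R\le_\gamma j$ or $i\le_\gamma r^L<_\gamma j<_\gamma r^R$. Reversals for sectors $i<_\gamma j$ (sector labels preserved, so ribbons of $\mathbb{G}$ and of the result correspond naturally): gluing (distinct vertices $(i,i_1,\dots,i_p),(j,j_1,\dots,j_q)$, after flipping $\omega(i)=-\omega(j)$, become $(i,j_1,\dots,j_q,j,i_1,\dots,i_p)$); slicing (vertex $(i,j_1,\dots,j_q,j,i_1,\dots,i_p)$ with $\omega(i)=-\omega(j)$ becomes $(i,i_1,\dots,i_p)$ and $(j,j_1,\dots,j_q)$); half-flipping (same vertex with $\omega(i)=\omega(j)$: split, flip $(j,j_1,\dots,j_q)$, glue back along $i,j$, giving $(i,j_q,\dots,j_1,j,i_1,\dots,i_p)$). *)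

theory Defs
  imports "HOL-Combinatorics.Combinatorics"
begin

(* Sectors are [2n+1] = {1..2n+1}; sigma (vertices) and gamma (boundary      *)
(* components) are permutations of the sectors; omega : sectors -> {1,-1}.  *)
(* The pairs (x, sigma x), x ~= 2n+1, are matched into ribbons; we encode    *)
(* the matching by a fixed-point-free involution eps on {1..2n}: the ribbon  *)
(* of x is ((x, sigma x), (eps x, sigma (eps x))).                           *)

definition sectors :: "nat \<Rightarrow> nat set" where
  "sectors n = {1..2*n+1}"

definition gamma_consec :: "(nat \<Rightarrow> nat) \<Rightarrow> nat \<Rightarrow> nat \<Rightarrow> bool" where
  "gamma_consec \<gamma> a b \<longleftrightarrow> \<gamma> a = b \<or> \<gamma> b = a"

definition untwisted_ribbon ::
  "(nat \<Rightarrow> nat) \<Rightarrow> (nat \<Rightarrow> nat) \<Rightarrow> (nat \<Rightarrow> int) \<Rightarrow> nat \<Rightarrow> nat \<Rightarrow> bool" where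
  "untwisted_ribbon \<sigma> \<gamma> \<omega> x y \<longleftrightarrow>
     gamma_consec \<gamma> x (\<sigma> y) \<and> gamma_consec \<gamma> (\<sigma> x) y \<and>
     \<omega> x = \<omega> (\<sigma> y) \<and> \<omega> (\<sigma> x) = \<omega> y"

definition twisted_ribbon ::
  "(nat \<Rightarrow> nat) \<Rightarrow> (nat \<Rightarrow> nat) \<Rightarrow> (nat \<Rightarrow> int) \<Rightarrow> nat \<Rightarrow> nat \<Rightarrow> bool" where
  "twisted_ribbon \<sigma> \<gamma> \<omega> x y \<longleftrightarrow>
     gamma_consec \<gamma> x y \<and> gamma_consec \<gamma> (\<sigma> x) (\<sigma> y) \<and>
     \<omega> x = - \<omega> y \<and> \<omega> (\<sigma> x) = - \<omega> (\<sigma> y)"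

definition fatgraph ::
  "nat \<Rightarrow> (nat \<Rightarrow> nat) \<Rightarrow> (nat \<Rightarrow> nat) \<Rightarrow> (nat \<Rightarrow> int) \<Rightarrow> (nat \<Rightarrow> nat) \<Rightarrow> bool" where
  "fatgraph n \<sigma> \<gamma> \<omega> \<epsilon> \<longleftrightarrow>
     \<sigma> permutes sectors n \<and> \<gamma> permutes sectors n \<and>
     \<sigma> (2*n+1) = 1 \<and> \<gamma> (2*n+1) = 1 \<and>
     (\<forall>s\<in>sectors n. \<omega> s = 1 \<or> \<omega> s = -1) \<and> \<omega> 1 = \<omega> (2*n+1) \<and>
     (\<forall>x\<in>{1..2*n}. \<epsilon> x \<in> {1..2*n} \<and> \<epsilon> x \<noteq> x \<and> \<epsilon> (\<epsilon> x) = x) \<and>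
     (\<forall>x\<in>{1..2*n}. untwisted_ribbon \<sigma> \<gamma> \<omega> x (\<epsilon> x) \<or> twisted_ribbon \<sigma> \<gamma> \<omega> x (\<epsilon> x))"

definition unicellular :: "nat \<Rightarrow> (nat \<Rightarrow> nat) \<Rightarrow> bool" where
  "unicellular n \<gamma> \<longleftrightarrow> (\<forall>s\<in>{1..2*n}. \<gamma> s = s + 1) \<and> \<gamma> (2*n+1) = 1"

(* A ribbon ((x, sigma x), (y, sigma y)) is represented by the set {x, y}
   of the first components of its two pairs. *)
definition ribbons :: "nat \<Rightarrow> (nat \<Rightarrow> nat) \<Rightarrow> nat set set" where
  "ribbons n \<epsilon> = {{x, \<epsilon> x} | x. x \<in> {1..2*n}}"

definition ribbon_sectors :: "(nat \<Rightarrow> nat) \<Rightarrow> nat set \<Rightarrow> nat set" where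
  "ribbon_sectors \<sigma> r = r \<union> \<sigma> ` r"

definition m_ribbon :: "(nat \<Rightarrow> nat) \<Rightarrow> (nat \<Rightarrow> int) \<Rightarrow> nat set \<Rightarrow> bool" where
  "m_ribbon \<sigma> \<omega> r \<longleftrightarrow> (\<forall>x\<in>r. \<omega> x = - \<omega> (\<sigma> x))"

definition b_ribbon :: "(nat \<Rightarrow> nat) \<Rightarrow> (nat \<Rightarrow> int) \<Rightarrow> nat set \<Rightarrow> bool" where
  "b_ribbon \<sigma> \<omega> r \<longleftrightarrow> (\<forall>x\<in>r. \<omega> x = \<omega> (\<sigma> x))"

(* For unicellular G, <_gamma is the usual order on {1..2n+1}. *)
definition ribbon_L :: "(nat \<Rightarrow> nat) \<Rightarrow> nat set \<Rightarrow> nat" where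
  "ribbon_L \<sigma> r = Min (ribbon_sectors \<sigma> r)"

definition ribbon_R :: "(nat \<Rightarrow> nat) \<Rightarrow> nat set \<Rightarrow> nat" where
  "ribbon_R \<sigma> r = Max (ribbon_sectors \<sigma> r)"

definition intersects :: "(nat \<Rightarrow> nat) \<Rightarrow> nat set \<Rightarrow> nat \<Rightarrow> nat \<Rightarrow> bool" where
  "intersects \<sigma> r i j \<longleftrightarrow>
     (ribbon_L \<sigma> r < i \<and> i < ribbon_R \<sigma> r \<and> ribbon_R \<sigma> r \<le> j) \<or>
     (i \<le> ribbon_L \<sigma> r \<and> ribbon_L \<sigma> r < j \<and> j < ribbon_R \<sigma> r)"

(* Reversals.  Besides sigma and omega we track, for every pair (x, sigma x) *)
(* of the original fatgraph, the first component tau x of the corresponding *)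
(* pair (tau x, sigma' (tau x)) of the current fatgraph (sector labels are   *)
(* preserved; the pairs = half-edges are carried along physically).          *)

definition vertex :: "(nat \<Rightarrow> nat) \<Rightarrow> nat \<Rightarrow> nat set" where
  "vertex \<sigma> x = {(\<sigma> ^^ k) x | k. True}"

definition flip_sigma :: "nat set \<Rightarrow> (nat \<Rightarrow> nat) \<Rightarrow> nat \<Rightarrow> nat" where
  "flip_sigma V \<sigma> x = (if x \<in> V then inv \<sigma> x else \<sigma> x)"

definition flip_omega :: "nat set \<Rightarrow> (nat \<Rightarrow> int) \<Rightarrow> nat \<Rightarrow> int" where
  "flip_omega V \<omega> x = (if x \<in> V then - \<omega> x else \<omega> x)"

(* the pair (t, sigma t) at a flipped vertex becomes (sigma t, t) *)
definition flip_tau :: "nat set \<Rightarrow> (nat \<Rightarrow> nat) \<Rightarrow> (nat \<Rightarrow> nat) \<Rightarrow> nat \<Rightarrow> nat" where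
  "flip_tau V \<sigma> \<tau> h = (if \<tau> h \<in> V then \<sigma> (\<tau> h) else \<tau> h)"

(* gluing (i,i1..ip),(j,j1..jq) into (i,j1..jq,j,i1..ip), and slicing
   (i,j1..jq,j,i1..ip) into (i,i1..ip),(j,j1..jq), are both sigma o (i j);
   the pair (i,i1) becomes (j,i1) and (j,j1) becomes (i,j1). *)
definition cut_sigma :: "nat \<Rightarrow> nat \<Rightarrow> (nat \<Rightarrow> nat) \<Rightarrow> nat \<Rightarrow> nat" where
  "cut_sigma i j \<sigma> = \<sigma> \<circ> transpose i j"

definition cut_tau :: "nat \<Rightarrow> nat \<Rightarrow> (nat \<Rightarrow> nat) \<Rightarrow> nat \<Rightarrow> nat" where
  "cut_tau i j \<tau> = transpose i j \<circ> \<tau>"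

definition negate_on :: "nat set \<Rightarrow> (nat \<Rightarrow> int) \<Rightarrow> nat \<Rightarrow> int" where
  "negate_on A \<omega> x = (if x \<in> A then - \<omega> x else \<omega> x)"

(* Orientation of the resulting fatgraph: the
   reversal reverses the direction in which the boundary traverses the
   segment between i and j, so the sector orientations there are those
   induced by the new boundary.  c = omega 1 is the global orientation
   convention of the original fatgraph. *)
definition reorient_gs :: "int \<Rightarrow> nat \<Rightarrow> nat \<Rightarrow> (nat \<Rightarrow> int) \<Rightarrow> nat \<Rightarrow> int" where
  "reorient_gs c i j \<omega> = negate_on (if \<omega> i = c then {i<..<j} else {i..j}) \<omega>"

definition reorient_hf :: "int \<Rightarrow> nat \<Rightarrow> nat \<Rightarrow> (nat \<Rightarrow> int) \<Rightarrow> nat \<Rightarrow> int" where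
  "reorient_hf c i j \<omega> = negate_on (if \<omega> i = c then {i<..j} else {i..<j}) \<omega>"

definition reversal ::
  "nat \<Rightarrow> (nat \<Rightarrow> nat) \<Rightarrow> (nat \<Rightarrow> int) \<Rightarrow> nat \<Rightarrow> nat \<Rightarrow>
   (nat \<Rightarrow> nat) \<Rightarrow> (nat \<Rightarrow> int) \<Rightarrow> (nat \<Rightarrow> nat) \<Rightarrow> bool" where
  "reversal n \<sigma> \<omega> i j \<sigma>' \<omega>' \<tau> \<longleftrightarrow>
     i \<in> sectors n \<and> j \<in> sectors n \<and> i < j \<and>
     ( \<comment> \<open>gluing: distinct vertices, possibly after flipping one of them\<close>
       (j \<notin> vertex \<sigma> i \<and>
        (\<exists>V\<in>{{}, vertex \<sigma> i, vertex \<sigma> j}.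
           flip_omega V \<omega> i = - flip_omega V \<omega> j \<and>
           \<sigma>' = cut_sigma i j (flip_sigma V \<sigma>) \<and>
           \<tau> = cut_tau i j (flip_tau V \<sigma> id) \<and>
           \<omega>' = reorient_gs (\<omega> 1) i j (flip_omega V \<omega>)))
     \<or> \<comment> \<open>slicing\<close>
       (j \<in> vertex \<sigma> i \<and> \<omega> i = - \<omega> j \<and>
        \<sigma>' = cut_sigma i j \<sigma> \<and> \<tau> = cut_tau i j id \<and>
        \<omega>' = reorient_gs (\<omega> 1) i j \<omega>)
     \<or> \<comment> \<open>half-flipping: slice, flip the vertex of j, glue back along i, j\<close>
       (j \<in> vertex \<sigma> i \<and> \<omega> i = \<omega> j \<and>
        (let \<sigma>1 = cut_sigma i j \<sigma>; \<tau>1 = cut_tau i j id; W = vertex \<sigma>1 j in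
         \<sigma>' = cut_sigma i j (flip_sigma W \<sigma>1) \<and>
         \<tau> = cut_tau i j (flip_tau W \<sigma>1 \<tau>1) \<and>
         \<omega>' = reorient_hf (\<omega> 1) i j (flip_omega W \<omega>))))"

end

theory Submission
  imports Defs
begin

(* In a unicellular fatgraph the boundary visits the sectors 1, 2, ..., 2n+1 in this order, and
   \<omega> records the direction in which it runs along each ribbon: leaving the pair (h, \<sigma> h) at
   its side in sector s, it moves on to sector s + 1 if \<omega> s agrees with \<omega> 1 on the side of h,
   or disagrees with it on the side of \<sigma> h, and to sector s - 1 otherwise. This follows by
   walking along the boundary, once a parity argument has excluded a direct step from sector 1
   to sector 2n+1. Hence a ribbon runs along two boundary segments, between the sectors s1, s1+1
   and s2, s2+1 with s1 \<noteq> s2, and these four sectors are its sectors.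
   An i,j-reversal reverses the stretch of boundary between the sectors i and j. A direct
   computation, the same for gluing, slicing and half-flipping, shows that the sign of
   \<omega> h * \<omega> (\<sigma> h) changes exactly when one segment of the pair (h, \<sigma> h) lies in [i, j) and
   the other does not. Both pairs of a ribbon carry the same two segments, so the ribbon switches
   between m and b exactly in that case, which is what "r intersects [i, j]" says about s1, s2. *)

section \<open>Orientation changes under a reversal\<close>

definition interval_mem :: "nat \<Rightarrow> nat \<Rightarrow> bool \<Rightarrow> bool \<Rightarrow> nat \<Rightarrow> bool" where
  "interval_mem i j p q x \<longleftrightarrow> (i < x \<and> x < j) \<or> (x = i \<and> p) \<or> (x = j \<and> q)"

lemma interval_mem_cong:
  "(x = i \<Longrightarrow> p = p') \<Longrightarrow> (x = j \<Longrightarrow> q = q') \<Longrightarrow>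
   interval_mem i j p q x = interval_mem i j p' q' x"
  by (auto simp: interval_mem_def)

lemma interval_mem_transpose:
  "i < j \<Longrightarrow> interval_mem i j p q (transpose i j x) = interval_mem i j q p x"
  by (auto simp: interval_mem_def transpose_def)

definition neg_one_if :: "bool \<Rightarrow> int" where
  "neg_one_if b = (if b then -1 else 1)"

lemma negate_on_eq: "negate_on A f x = neg_one_if (x \<in> A) * f x"
  by (simp add: negate_on_def neg_one_if_def)

lemma flip_omega_eq: "flip_omega A f x = neg_one_if (x \<in> A) * f x"
  by (simp add: flip_omega_def neg_one_if_def)

lemma negate_interval_transpose_mult:
  fixes \<phi> :: "nat \<Rightarrow> int" and p q :: bool
  assumes "i < j" and "\<phi> i = - \<phi> j"
  defines "\<psi> \<equiv> negate_on {x. interval_mem i j p q x} \<phi>"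
  shows "\<psi> (transpose i j a) * \<psi> b =
    neg_one_if (interval_mem i j (\<not> q) (\<not> p) a \<noteq> interval_mem i j p q b) * (\<phi> a * \<phi> b)"
proof -
  have "\<phi> (transpose i j a) = neg_one_if (a = i \<or> a = j) * \<phi> a"
    using assms by (auto simp: transpose_def neg_one_if_def)
  moreover have "interval_mem i j (\<not> q) (\<not> p) a \<longleftrightarrow> interval_mem i j q p a \<noteq> (a = i \<or> a = j)"
    using \<open>i < j\<close> by (auto simp: interval_mem_def)
  ultimately show ?thesis
    by (simp add: \<psi>_def negate_on_eq interval_mem_transpose[OF \<open>i < j\<close>] neg_one_if_def)
qed

lemma reorient_gs_eq:
  "i < j \<Longrightarrow> reorient_gs c i j \<phi> = negate_on {x. interval_mem i j (\<phi> i \<noteq> c) (\<phi> i \<noteq> c) x} \<phi>"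
  by (auto simp: reorient_gs_def negate_on_def interval_mem_def fun_eq_iff)

lemma reorient_hf_eq:
  "i < j \<Longrightarrow> reorient_hf c i j \<phi> = negate_on {x. interval_mem i j (\<phi> i \<noteq> c) (\<phi> i = c) x} \<phi>"
  by (auto simp: reorient_hf_def negate_on_def interval_mem_def fun_eq_iff)

lemma gluing_pair_sign:
  fixes \<sigma> :: "nat \<Rightarrow> nat" and \<omega> :: "nat \<Rightarrow> int"
  assumes "i < j" and closed: "\<sigma> h \<in> V \<longleftrightarrow> h \<in> V" and inv: "inv \<sigma> (\<sigma> h) = h"
    and units: "\<omega> i = 1 \<or> \<omega> i = -1" "\<omega> j = 1 \<or> \<omega> j = -1" "c = 1 \<or> c = -1"
    and opp: "flip_omega V \<omega> i = - flip_omega V \<omega> j"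
    and \<sigma>': "\<sigma>' = cut_sigma i j (flip_sigma V \<sigma>)"
    and \<tau>: "\<tau> = cut_tau i j (flip_tau V \<sigma> id)"
    and \<omega>': "\<omega>' = reorient_gs c i j (flip_omega V \<omega>)"
  shows "\<omega>' (\<tau> h) * \<omega>' (\<sigma>' (\<tau> h)) = neg_one_if
    (interval_mem i j (\<omega> i = c) (\<omega> j \<noteq> c) h \<noteq> interval_mem i j (\<omega> i \<noteq> c) (\<omega> j = c) (\<sigma> h))
    * (\<omega> h * \<omega> (\<sigma> h))"
proof -
  define \<phi> where "\<phi> = flip_omega V \<omega>"
  define E where "E \<longleftrightarrow> \<phi> i = c"
  define a b where "a = (if h \<in> V then \<sigma> h else h)" and "b = (if h \<in> V then h else \<sigma> h)"
  have \<tau>h: "\<tau> h = transpose i j a"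
    by (simp add: \<tau> cut_tau_def flip_tau_def a_def)
  have \<sigma>'\<tau>h: "\<sigma>' (\<tau> h) = b"
    using closed inv by (simp add: \<tau>h \<sigma>' cut_sigma_def flip_sigma_def a_def b_def)
  have \<phi>ab: "\<phi> a * \<phi> b = \<omega> h * \<omega> (\<sigma> h)"
    using closed by (auto simp: a_def b_def \<phi>_def flip_omega_eq neg_one_if_def)
  have ends: "E \<longleftrightarrow> (\<omega> i = c) \<noteq> (i \<in> V)" "E \<longleftrightarrow> (\<omega> j \<noteq> c) \<noteq> (j \<in> V)"
    using units opp by (auto simp: E_def \<phi>_def flip_omega_eq neg_one_if_def)
  have "interval_mem i j E E x =
      interval_mem i j ((\<omega> i = c) \<noteq> (x \<in> V)) ((\<omega> j \<noteq> c) \<noteq> (x \<in> V)) x" for x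
    using ends by (intro interval_mem_cong) auto
  moreover have "interval_mem i j (\<not> E) (\<not> E) x =
      interval_mem i j ((\<omega> i \<noteq> c) \<noteq> (x \<in> V)) ((\<omega> j = c) \<noteq> (x \<in> V)) x" for x
    using ends by (intro interval_mem_cong) auto
  ultimately have "(interval_mem i j E E a \<noteq> interval_mem i j (\<not> E) (\<not> E) b) \<longleftrightarrow>
      (interval_mem i j (\<omega> i = c) (\<omega> j \<noteq> c) h \<noteq> interval_mem i j (\<omega> i \<noteq> c) (\<omega> j = c) (\<sigma> h))"
    using closed by (cases "h \<in> V") (auto simp: a_def b_def)
  then show ?thesis
    using negate_interval_transpose_mult[OF \<open>i < j\<close> opp[folded \<phi>_def], of "\<not> E" "\<not> E" a b]
    unfolding \<sigma>'\<tau>h unfolding \<tau>h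
    by (simp add: \<omega>' reorient_gs_eq[OF \<open>i < j\<close>] \<phi>_def[symmetric] E_def \<phi>ab)
qed

lemma half_flip_pair_sign:
  fixes \<sigma> :: "nat \<Rightarrow> nat" and \<omega> :: "nat \<Rightarrow> int"
  assumes "i < j" and "i \<notin> W" and "j \<in> W"
    and closed: "\<sigma> h \<in> W \<longleftrightarrow> transpose i j h \<in> W"
    and inv: "inv (\<sigma> \<circ> transpose i j) (\<sigma> h) = transpose i j h"
    and "\<omega> i = \<omega> j"
    and \<sigma>': "\<sigma>' = cut_sigma i j (flip_sigma W (cut_sigma i j \<sigma>))"
    and \<tau>: "\<tau> = cut_tau i j (flip_tau W (cut_sigma i j \<sigma>) (cut_tau i j id))"
    and \<omega>': "\<omega>' = reorient_hf c i j (flip_omega W \<omega>)"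
  shows "\<omega>' (\<tau> h) * \<omega>' (\<sigma>' (\<tau> h)) = neg_one_if
    (interval_mem i j (\<omega> i = c) (\<omega> j \<noteq> c) h \<noteq> interval_mem i j (\<omega> i \<noteq> c) (\<omega> j = c) (\<sigma> h))
    * (\<omega> h * \<omega> (\<sigma> h))"
proof -
  define \<phi> where "\<phi> = flip_omega W \<omega>"
  define E where "E \<longleftrightarrow> \<omega> i = c"
  (* After slicing, the pair of h is (transpose i j h, \<sigma> h); the half-flip glues it back
     along W as in gluing_pair_sign. *)
  define th where "th = transpose i j h"
  define a b where "a = (if th \<in> W then \<sigma> h else th)" and "b = (if th \<in> W then th else \<sigma> h)"
  have \<tau>h: "\<tau> h = transpose i j a"
    by (simp add: \<tau> cut_tau_def cut_sigma_def flip_tau_def a_def th_def)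
  have \<sigma>'\<tau>h: "\<sigma>' (\<tau> h) = b"
    using closed inv by (simp add: \<tau>h \<sigma>' cut_sigma_def flip_sigma_def a_def b_def th_def)
  have \<phi>i: "\<phi> i = \<omega> i" and opp: "\<phi> i = - \<phi> j"
    using \<open>i \<notin> W\<close> \<open>j \<in> W\<close> \<open>\<omega> i = \<omega> j\<close> by (simp_all add: \<phi>_def flip_omega_def)
  have "\<omega> th = \<omega> h"
    using \<open>\<omega> i = \<omega> j\<close> by (simp add: th_def transpose_def)
  then have \<phi>ab: "\<phi> a * \<phi> b = \<omega> h * \<omega> (\<sigma> h)"
    using closed by (auto simp: a_def b_def \<phi>_def flip_omega_eq neg_one_if_def th_def)
  have "(interval_mem i j (\<not> E) E a \<noteq> interval_mem i j (\<not> E) E b) \<longleftrightarrow>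
      (interval_mem i j E (\<not> E) h \<noteq> interval_mem i j (\<not> E) E (\<sigma> h))"
    using interval_mem_transpose[OF \<open>i < j\<close>, of "\<not> E" E h] by (auto simp: a_def b_def th_def)
  then show ?thesis
    using negate_interval_transpose_mult[OF \<open>i < j\<close> opp, of "\<not> E" E a b] \<open>\<omega> i = \<omega> j\<close>
    unfolding \<sigma>'\<tau>h unfolding \<tau>h
    by (simp add: \<omega>' reorient_hf_eq[OF \<open>i < j\<close>] \<phi>_def[symmetric] \<phi>i E_def \<phi>ab)
qed

lemma vertex_self: "x \<in> vertex f x"
  unfolding vertex_def by (auto intro: exI[of _ 0])

lemma vertex_eq_orbit: "permutation f \<Longrightarrow> vertex f x = orbit f x"
  by (simp add: vertex_def orbit_altdef_permutation)

lemma vertex_apply_iff: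
  assumes "permutation f"
  shows "f y \<in> vertex f x \<longleftrightarrow> y \<in> vertex f x"
proof -
  have "y \<in> orbit f (f y)"
    using assms by (simp add: permutation_orbit_step permutation_self_in_orbit)
  then show ?thesis
    using assms by (auto simp: vertex_eq_orbit intro: orbit.step orbit_trans)
qed

lemma vertex_subset:
  assumes "x \<in> A" and "\<And>y. y \<in> A \<Longrightarrow> f y \<in> A"
  shows "vertex f x \<subseteq> A"
proof -
  have "(f ^^ k) x \<in> A" for k
    using assms by (induction k) auto
  then show ?thesis by (auto simp: vertex_def)
qed

lemma vertex_slice:
  assumes "i \<noteq> j" and "j \<in> vertex f i"
  shows "i \<notin> vertex (f \<circ> transpose i j) j"
proof -
  define k where "k = (LEAST k. (f ^^ k) i = j)"
  have k: "(f ^^ k) i = j"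
    using assms(2) unfolding k_def vertex_def by (auto intro: LeastI)
  have before_k: "(f ^^ l) i \<noteq> j" if "l < k" for l
    using that unfolding k_def by (rule not_less_Least)
  have "0 < k"
    using k \<open>i \<noteq> j\<close> by (cases k) auto
  have not_i: "(f ^^ l) i \<noteq> i" if "0 < l" "l < k" for l
  proof
    assume "(f ^^ l) i = i"
    then have "(f ^^ (k - l)) i = (f ^^ (k - l + l)) i"
      by (simp add: funpow_add)
    with that k before_k[of "k - l"] show False by simp
  qed
  define A where "A = {(f ^^ l) i | l. 0 < l \<and> l \<le> k}"
  have "(f \<circ> transpose i j) y \<in> A" if "y \<in> A" for y
  proof -
    obtain l where l: "y = (f ^^ l) i" "0 < l" "l \<le> k"
      using \<open>y \<in> A\<close> by (auto simp: A_def)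
    show ?thesis
    proof (cases "l = k")
      case True
      then show ?thesis
        using l k \<open>0 < k\<close> by (auto simp: A_def intro!: exI[of _ 1])
    next
      case False
      then have "(f \<circ> transpose i j) y = (f ^^ Suc l) i"
        using l not_i before_k by (simp add: transpose_def)
      then show ?thesis
        using l False unfolding A_def by (intro CollectI exI[of _ "Suc l"]) simp
    qed
  qed
  moreover have "j \<in> A"
    using k \<open>0 < k\<close> by (auto simp: A_def)
  moreover have "i \<notin> A"
  proof
    assume "i \<in> A"
    then obtain l where "i = (f ^^ l) i" "0 < l" "l \<le> k"
      by (auto simp: A_def)
    then show False
      using not_i[of l] k \<open>i \<noteq> j\<close> by (cases "l = k") auto
  qed
  ultimately show ?thesis
    using vertex_subset[of j A] by blast
qed

lemma flip_empty [simp]: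
  "flip_sigma {} \<sigma> = \<sigma>" "flip_tau {} \<sigma> \<tau> = \<tau>" "flip_omega {} \<omega> = \<omega>"
  by (simp_all add: flip_sigma_def flip_tau_def flip_omega_def fun_eq_iff)

(* Slicing is the case V = {} of gluing. *)
lemma reversal_cases:
  assumes "reversal n \<sigma> \<omega> i j \<sigma>' \<omega>' \<tau>"
  obtains (glue) V where "V \<in> {{}, vertex \<sigma> i, vertex \<sigma> j}"
      "flip_omega V \<omega> i = - flip_omega V \<omega> j"
      "\<sigma>' = cut_sigma i j (flip_sigma V \<sigma>)" "\<tau> = cut_tau i j (flip_tau V \<sigma> id)"
      "\<omega>' = reorient_gs (\<omega> 1) i j (flip_omega V \<omega>)"
  | (half_flip) "j \<in> vertex \<sigma> i" "\<omega> i = \<omega> j"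
      "\<sigma>' = cut_sigma i j (flip_sigma (vertex (cut_sigma i j \<sigma>) j) (cut_sigma i j \<sigma>))"
      "\<tau> = cut_tau i j (flip_tau (vertex (cut_sigma i j \<sigma>) j) (cut_sigma i j \<sigma>) (cut_tau i j id))"
      "\<omega>' = reorient_hf (\<omega> 1) i j (flip_omega (vertex (cut_sigma i j \<sigma>) j) \<omega>)"
  using assms unfolding reversal_def Let_def
proof (elim conjE disjE bexE)
  assume "\<omega> i = - \<omega> j" "\<sigma>' = cut_sigma i j \<sigma>" "\<tau> = cut_tau i j id"
    "\<omega>' = reorient_gs (\<omega> 1) i j \<omega>"
  then show thesis
    by (intro glue[of "{}"]) simp_all
qed (rule glue half_flip; assumption)+

lemma reversal_pair_sign:
  assumes \<sigma>: "\<sigma> permutes sectors n" and units: "\<forall>s\<in>sectors n. \<omega> s = 1 \<or> \<omega> s = -1"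
    and rev: "reversal n \<sigma> \<omega> i j \<sigma>' \<omega>' \<tau>"
  shows "\<omega>' (\<tau> h) * \<omega>' (\<sigma>' (\<tau> h)) = neg_one_if
    (interval_mem i j (\<omega> i = \<omega> 1) (\<omega> j \<noteq> \<omega> 1) h \<noteq>
     interval_mem i j (\<omega> i \<noteq> \<omega> 1) (\<omega> j = \<omega> 1) (\<sigma> h)) * (\<omega> h * \<omega> (\<sigma> h))"
proof -
  have ij: "i \<in> sectors n" "j \<in> sectors n" "i < j"
    using rev by (simp_all add: reversal_def)
  have "1 \<in> sectors n"
    by (simp add: sectors_def)
  then have \<omega>_units: "\<omega> i = 1 \<or> \<omega> i = -1" "\<omega> j = 1 \<or> \<omega> j = -1" "\<omega> 1 = 1 \<or> \<omega> 1 = -1"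
    using units ij by blast+
  have "permutation \<sigma>"
    using \<sigma> permutation_permutes by (auto simp: sectors_def)
  have inv_\<sigma>: "inv \<sigma> (\<sigma> h) = h"
    using \<sigma> by (simp add: permutes_inverses(2))
  from rev show ?thesis
  proof (cases rule: reversal_cases)
    case (glue V)
    have "\<sigma> h \<in> V \<longleftrightarrow> h \<in> V"
      using glue(1) \<open>permutation \<sigma>\<close> by (auto simp: vertex_apply_iff)
    show ?thesis
      by (rule gluing_pair_sign[OF ij(3) _ inv_\<sigma> \<omega>_units glue(2-5)]) fact
  next
    case half_flip
    define \<sigma>\<^sub>1 where "\<sigma>\<^sub>1 = \<sigma> \<circ> transpose i j"
    have \<sigma>\<^sub>1: "\<sigma>\<^sub>1 permutes sectors n"
      unfolding \<sigma>\<^sub>1_def by (rule permutes_compose[OF permutes_swap_id[OF ij(1,2)] \<sigma>])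
    have "permutation \<sigma>\<^sub>1"
      using \<sigma>\<^sub>1 permutation_permutes by (auto simp: sectors_def)
    have "\<sigma> h = \<sigma>\<^sub>1 (transpose i j h)"
      by (simp add: \<sigma>\<^sub>1_def)
    then have "\<sigma> h \<in> vertex \<sigma>\<^sub>1 j \<longleftrightarrow> transpose i j h \<in> vertex \<sigma>\<^sub>1 j"
         and "inv \<sigma>\<^sub>1 (\<sigma> h) = transpose i j h"
      using \<sigma>\<^sub>1 \<open>permutation \<sigma>\<^sub>1\<close> by (simp_all add: vertex_apply_iff permutes_inverses(2))
    moreover have "i \<notin> vertex \<sigma>\<^sub>1 j"
      unfolding \<sigma>\<^sub>1_def using vertex_slice[OF _ half_flip(1)] ij(3) by simp
    ultimately show ?thesis
      using half_flip_pair_sign[OF ij(3) _ vertex_self _ _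
          half_flip(2-5)[folded \<sigma>\<^sub>1_def cut_sigma_def]]
      by (simp add: \<sigma>\<^sub>1_def cut_sigma_def)
  qed
qed

lemma reversal_abs_orientation:
  "reversal n \<sigma> \<omega> i j \<sigma>' \<omega>' \<tau> \<Longrightarrow> \<bar>\<omega>' x\<bar> = \<bar>\<omega> x\<bar>"
  by (erule reversal_cases)
    (simp_all add: reorient_gs_def reorient_hf_def negate_on_def flip_omega_def)

lemma reversal_maps_sectors:
  assumes \<sigma>: "\<sigma> permutes sectors n" and rev: "reversal n \<sigma> \<omega> i j \<sigma>' \<omega>' \<tau>"
    and x: "x \<in> sectors n"
  shows "\<tau> x \<in> sectors n" and "\<sigma>' x \<in> sectors n"
proof -
  have ij: "i \<in> sectors n" "j \<in> sectors n"
    using rev by (simp_all add: reversal_def)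
  then have tr: "transpose i j y \<in> sectors n" if "y \<in> sectors n" for y
    using that by (auto simp: transpose_def)
  have flip: "flip_sigma V \<rho> y \<in> sectors n" if "\<rho> permutes sectors n" "y \<in> sectors n" for V \<rho> y
    using that permutes_in_image[OF that(1)] permutes_in_image[OF permutes_inv[OF that(1)]]
    by (simp add: flip_sigma_def)
  have \<sigma>\<^sub>1: "\<sigma> \<circ> transpose i j permutes sectors n"
    by (rule permutes_compose[OF permutes_swap_id[OF ij] \<sigma>])
  have "\<tau> x \<in> sectors n \<and> \<sigma>' x \<in> sectors n"
    using rev
  proof (cases rule: reversal_cases)
    case (glue V)
    then show ?thesis
      using x permutes_in_image[OF \<sigma>]
      by (simp add: cut_sigma_def cut_tau_def flip_tau_def tr flip[OF \<sigma>])
  next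
    case half_flip
    then show ?thesis
      using x permutes_in_image[OF \<sigma>]
      by (simp add: cut_sigma_def cut_tau_def flip_tau_def tr flip[OF \<sigma>\<^sub>1])
  qed
  then show "\<tau> x \<in> sectors n" and "\<sigma>' x \<in> sectors n"
    by simp_all
qed

section \<open>The boundary walk of a unicellular fatgraph\<close>

locale unicellular_fatgraph =
  fixes n :: nat and \<sigma> \<gamma> \<epsilon> :: "nat \<Rightarrow> nat" and \<omega> :: "nat \<Rightarrow> int"
  assumes fatgraph: "fatgraph n \<sigma> \<gamma> \<omega> \<epsilon>" and unicellular: "unicellular n \<gamma>" and n_pos: "0 < n"
begin

lemma sigma_permutes: "\<sigma> permutes sectors n"
  using fatgraph by (simp add: fatgraph_def)

lemma sigma_last: "\<sigma> (2*n+1) = 1"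
  using fatgraph by (simp add: fatgraph_def)

lemma orientation_unit: "s \<in> sectors n \<Longrightarrow> \<omega> s = 1 \<or> \<omega> s = -1"
  using fatgraph by (simp add: fatgraph_def)

lemma orientation_last: "\<omega> (2*n+1) = \<omega> 1"
  using fatgraph by (simp add: fatgraph_def)

lemma matching:
  "x \<in> {1..2*n} \<Longrightarrow> \<epsilon> x \<in> {1..2*n} \<and> \<epsilon> x \<noteq> x \<and> \<epsilon> (\<epsilon> x) = x"
  using fatgraph by (simp add: fatgraph_def)

lemma ribbon_cases:
  "x \<in> {1..2*n} \<Longrightarrow> untwisted_ribbon \<sigma> \<gamma> \<omega> x (\<epsilon> x) \<or> twisted_ribbon \<sigma> \<gamma> \<omega> x (\<epsilon> x)"
  using fatgraph by (simp add: fatgraph_def)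

lemma sigma_in_sectors_iff [simp]: "\<sigma> x \<in> sectors n \<longleftrightarrow> x \<in> sectors n"
  by (rule permutes_in_image[OF sigma_permutes])

lemma inv_sigma_sigma [simp]: "inv \<sigma> (\<sigma> x) = x"
  by (rule permutes_inverses(2)[OF sigma_permutes])

lemma sigma_inv_sigma [simp]: "\<sigma> (inv \<sigma> x) = x"
  by (rule permutes_inverses(1)[OF sigma_permutes])

lemma inv_sigma_first: "inv \<sigma> 1 = 2*n+1"
  by (metis inv_sigma_sigma sigma_last)

lemma gamma_consec_iff:
  assumes "a \<in> sectors n" and "b \<in> sectors n"
  shows "gamma_consec \<gamma> a b \<longleftrightarrow>
    b = a + 1 \<or> a = b + 1 \<or> (a = 2*n+1 \<and> b = 1) \<or> (a = 1 \<and> b = 2*n+1)"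
proof -
  have "\<gamma> s = (if s = 2*n+1 then 1 else s + 1)" if "s \<in> sectors n" for s
    using unicellular that by (auto simp: unicellular_def sectors_def)
  then show ?thesis
    using assms n_pos by (auto simp: gamma_consec_def sectors_def)
qed

text \<open>The side \<open>(h, True)\<close> of the pair \<open>(h, \<sigma> h)\<close> lies in the sector \<open>h\<close>, the side
  \<open>(h, False)\<close> in the sector \<open>\<sigma> h\<close>. The boundary runs along the ribbon of \<open>h\<close> from a side
  to its opposite side.\<close>

definition sides :: "(nat \<times> bool) set" where
  "sides = {1..2*n} \<times> UNIV"

definition sector :: "nat \<times> bool \<Rightarrow> nat" where
  "sector z = (if snd z then fst z else \<sigma> (fst z))"

definition twisted :: "nat \<Rightarrow> bool" where
  "twisted h \<longleftrightarrow> twisted_ribbon \<sigma> \<gamma> \<omega> h (\<epsilon> h)"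

definition opposite :: "nat \<times> bool \<Rightarrow> nat \<times> bool" where
  "opposite z = (\<epsilon> (fst z), if twisted (fst z) then snd z else \<not> snd z)"

definition forward :: "nat \<times> bool \<Rightarrow> bool" where
  "forward z \<longleftrightarrow> (\<omega> (sector z) = \<omega> 1) = snd z"

lemma sector_simps [simp]: "sector (h, True) = h" "sector (h, False) = \<sigma> h"
  by (simp_all add: sector_def)

lemma sector_in_sectors:
  assumes "z \<in> sides"
  shows "sector z \<in> sectors n"
proof -
  have "fst z \<in> sectors n"
    using assms by (auto simp: sides_def sectors_def)
  then show ?thesis
    by (simp add: sector_def)
qed

lemma twisted_matching: "h \<in> {1..2*n} \<Longrightarrow> twisted (\<epsilon> h) = twisted h"
  using matching[of h] by (auto simp: twisted_def twisted_ribbon_def gamma_consec_def)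

lemma opposite_in_sides: "z \<in> sides \<Longrightarrow> opposite z \<in> sides"
  using matching by (auto simp: sides_def opposite_def)

lemma opposite_opposite: "z \<in> sides \<Longrightarrow> opposite (opposite z) = z"
  using matching twisted_matching by (auto simp: sides_def opposite_def)

lemma gamma_consec_opposite:
  assumes "z \<in> sides"
  shows "gamma_consec \<gamma> (sector z) (sector (opposite z))"
proof -
  obtain h b where z: "z = (h, b)" and h: "h \<in> {1..2*n}"
    using assms by (auto simp: sides_def)
  have "gamma_consec \<gamma> a c = gamma_consec \<gamma> c a" for a c
    by (auto simp: gamma_consec_def)
  then show ?thesis
    using ribbon_cases[OF h]
    by (auto simp: z opposite_def sector_def twisted_def twisted_ribbon_def untwisted_ribbon_def)
qed

lemma forward_opposite:
  assumes "z \<in> sides"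
  shows "forward (opposite z) \<longleftrightarrow> \<not> forward z"
proof -
  obtain h b where z: "z = (h, b)" and h: "h \<in> {1..2*n}"
    using assms by (auto simp: sides_def)
  have "1 \<in> sectors n" "h \<in> sectors n"
    using h by (simp_all add: sectors_def)
  then have "\<omega> 1 = 1 \<or> \<omega> 1 = -1" "\<omega> h = 1 \<or> \<omega> h = -1" "\<omega> (\<sigma> h) = 1 \<or> \<omega> (\<sigma> h) = -1"
    by (simp_all add: orientation_unit)
  then show ?thesis
    using ribbon_cases[OF h]
    by (auto simp: z opposite_def forward_def sector_def twisted_def twisted_ribbon_def
        untwisted_ribbon_def)
qed

lemma side_cases: "z \<in> sides \<Longrightarrow> z = (sector z, True) \<or> z = (inv \<sigma> (sector z), False)"
  by (cases z) (auto simp: sector_def)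

lemma inner_sides:
  assumes "t \<in> {2..2*n}"
  shows "(t, True) \<in> sides" and "(inv \<sigma> t, False) \<in> sides"
proof -
  have "inv \<sigma> t \<noteq> 2*n+1"
  proof
    assume "inv \<sigma> t = 2*n+1"
    then have "t = 1"
      by (metis sigma_inv_sigma sigma_last)
    with assms show False
      by simp
  qed
  moreover have "inv \<sigma> t \<in> sectors n"
    using assms sigma_in_sectors_iff[of "inv \<sigma> t"] by (simp add: sectors_def)
  ultimately show "(t, True) \<in> sides" "(inv \<sigma> t, False) \<in> sides"
    using assms by (auto simp: sides_def sectors_def)
qed

lemma side_eqI:
  assumes "z \<in> sides" "z' \<in> sides" "sector z = sector z'" "forward z \<longleftrightarrow> forward z'"
  shows "z = z'"
proof -
  have "forward (sector z, True) \<noteq> forward (inv \<sigma> (sector z), False)"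
    by (simp add: forward_def)
  then show ?thesis
    using side_cases[OF assms(1)] side_cases[OF assms(2)] assms(3,4) by metis
qed

lemma forward_side_exists:
  assumes "t \<in> {1..2*n}"
  obtains z where "z \<in> sides" "sector z = t" "forward z"
proof (cases "t = 1 \<or> \<omega> t = \<omega> 1")
  case True
  then show thesis
    using assms by (intro that[of "(t, True)"]) (auto simp: sides_def forward_def)
next
  case False
  then show thesis
    using assms inner_sides[of t] by (intro that[of "(inv \<sigma> t, False)"]) (auto simp: forward_def)
qed

lemma side_at_first: "z \<in> sides \<Longrightarrow> sector z = 1 \<Longrightarrow> z = (1, True)"
  using side_cases[of z] inv_sigma_first by (auto simp: sides_def)

lemma not_forward_at_last: "z \<in> sides \<Longrightarrow> sector z = 2*n+1 \<Longrightarrow> \<not> forward z"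
  using side_cases[of z] orientation_last by (auto simp: sides_def forward_def)

lemma sector_opposite_inner:
  assumes "z \<in> sides" and "sector z \<in> {2..2*n}"
  shows "sector (opposite z) = sector z + 1 \<or> sector (opposite z) + 1 = sector z"
  using gamma_consec_opposite[OF assms(1)] assms
    gamma_consec_iff[OF sector_in_sectors sector_in_sectors, OF assms(1) opposite_in_sides]
  by auto

lemma inner_sector_sides:
  assumes "t \<in> {2..2*n}"
  obtains u\<^sub>1 u\<^sub>2 where "u\<^sub>1 \<in> sides" "u\<^sub>2 \<in> sides" "sector u\<^sub>1 = t" "sector u\<^sub>2 = t" "u\<^sub>1 \<noteq> u\<^sub>2"
  using inner_sides[OF assms] by (intro that[of "(t, True)" "(inv \<sigma> t, False)"]) simp_all

lemma side_eq_either: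
  assumes "z \<in> sides" "u\<^sub>1 \<in> sides" "u\<^sub>2 \<in> sides" "u\<^sub>1 \<noteq> u\<^sub>2"
    and "sector u\<^sub>1 = sector z" "sector u\<^sub>2 = sector z"
  shows "z = u\<^sub>1 \<or> z = u\<^sub>2"
  using side_cases[OF assms(1)] side_cases[OF assms(2)] side_cases[OF assms(3)] assms(4-6)
  by metis

lemma first_side: "(1, True) \<in> sides"
  using n_pos by (simp add: sides_def)

lemma opposite_first_not_last: "sector (opposite (1, True)) \<noteq> 2*n+1"
proof
  assume last: "sector (opposite (1, True)) = 2*n+1"
  have alternating: "sector (opposite z) = (if even t then t + 1 else t - 1)"
    if "t \<in> {2..2*n}" "z \<in> sides" "sector z = t" for t z
    using that
  proof (induction t arbitrary: z rule: less_induct)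
    case (less t)
    have z': "opposite z \<in> sides" "opposite (opposite z) = z"
      using less.prems(2) by (simp_all add: opposite_in_sides opposite_opposite)
    consider "t = 2" | "2 < t" "odd t" | "2 < t" "even t"
      using less.prems(1) by fastforce
    then show ?case
    proof cases
      case 1
      have "opposite z \<noteq> (1, True)"
        using last less.prems(3) 1 z'(2) by auto
      then show ?thesis
        using sector_opposite_inner[OF less.prems(2)] side_at_first[OF z'(1)] less.prems 1 by auto
    next
      case 2
      have inner: "t - 1 \<in> {2..2*n}"
        using 2 less.prems(1) by auto
      then obtain u\<^sub>1 u\<^sub>2 where u: "u\<^sub>1 \<in> sides" "u\<^sub>2 \<in> sides" "sector u\<^sub>1 = t - 1" "sector u\<^sub>2 = t - 1"
        "u\<^sub>1 \<noteq> u\<^sub>2"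
        by (rule inner_sector_sides)
      then have "sector (opposite u\<^sub>1) = t" "sector (opposite u\<^sub>2) = t"
        using less.IH[OF _ inner] 2 by simp_all
      moreover have "opposite u\<^sub>1 \<noteq> opposite u\<^sub>2"
        using u opposite_opposite by metis
      ultimately have "z = opposite u\<^sub>1 \<or> z = opposite u\<^sub>2"
        using side_eq_either[OF less.prems(2) opposite_in_sides opposite_in_sides] u less.prems(3)
        by simp
      then show ?thesis
        using u opposite_opposite[OF u(1)] opposite_opposite[OF u(2)] 2 by auto
    next
      case 3
      have inner: "t - 1 \<in> {2..2*n}"
        using 3 less.prems(1) by auto
      have "sector (opposite z) \<noteq> t - 1"
      proof
        assume "sector (opposite z) = t - 1"
        then have "sector (opposite (opposite z)) = t - 2"
          using less.IH[OF _ inner z'(1)] 3 by simp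
        then show False
          using z'(2) less.prems(3) 3 by simp
      qed
      then show ?thesis
        using sector_opposite_inner[OF less.prems(2)] less.prems 3 by auto
    qed
  qed
  have "2*n \<in> {2..2*n}"
    using n_pos by simp
  then obtain u\<^sub>1 u\<^sub>2 where u: "u\<^sub>1 \<in> sides" "u\<^sub>2 \<in> sides" "sector u\<^sub>1 = 2*n" "sector u\<^sub>2 = 2*n"
    "u\<^sub>1 \<noteq> u\<^sub>2"
    by (rule inner_sector_sides)
  then have "sector (opposite u\<^sub>1) = 2*n+1" "sector (opposite u\<^sub>2) = 2*n+1"
    using alternating[OF \<open>2*n \<in> _\<close>] by simp_all
  then have "opposite u\<^sub>1 = opposite u\<^sub>2"
    using side_eqI not_forward_at_last opposite_in_sides u(1,2) by metis
  then show False
    using u opposite_opposite by metis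
qed

lemma sector_opposite_first: "sector (opposite (1, True)) = 2"
proof -
  have "sector (opposite (1, True)) \<in> sectors n"
    by (rule sector_in_sectors[OF opposite_in_sides[OF first_side]])
  then show ?thesis
    using gamma_consec_opposite[OF first_side] gamma_consec_iff opposite_first_not_last n_pos
    by (auto simp: sectors_def)
qed

lemma boundary_walk:
  assumes "t \<in> {1..2*n}" and "z \<in> sides" and "sector z = t"
  shows "sector (opposite z) = (if forward z then t + 1 else t - 1)"
  using assms
proof (induction t arbitrary: z rule: less_induct)
  case (less t)
  have z': "opposite z \<in> sides" "opposite (opposite z) = z"
    "forward (opposite z) \<longleftrightarrow> \<not> forward z"
    using less.prems(2) by (simp_all add: opposite_in_sides opposite_opposite forward_opposite)
  show ?case
  proof (cases "t = 1")
    case True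
    then have "z = (1, True)"
      using side_at_first less.prems by blast
    then show ?thesis
      using sector_opposite_first by (simp add: forward_def True)
  next
    case False
    have prev: "t - 1 < t" "t - 1 \<in> {1..2*n}"
      using False less.prems(1) by auto
    then have IH: "sector (opposite u) = (if forward u then t else t - 1 - 1)"
      if "u \<in> sides" "sector u = t - 1" for u
      using less.IH[OF _ _ that] False by simp
    have "t \<in> {2..2*n}"
      using False less.prems(1) by auto
    then have near: "sector (opposite z) = t + 1 \<or> sector (opposite z) = t - 1"
      using sector_opposite_inner[OF less.prems(2)] less.prems(3) by auto
    show ?thesis
    proof (cases "forward z")
      case True
      then have "sector (opposite z) \<noteq> t - 1"
        using IH[OF z'(1)] z'(2,3) less.prems False by auto
      then show ?thesis
        using near True by auto
    next
      case not_forward: False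
      obtain w where w: "w \<in> sides" "sector w = t - 1" "forward w"
        using forward_side_exists[OF prev(2)] by blast
      then have "opposite w = z"
        using side_eqI[OF opposite_in_sides[OF w(1)] less.prems(2)] IH[OF w(1,2)]
          forward_opposite[OF w(1)] not_forward less.prems(3) by auto
      then show ?thesis
        using opposite_opposite[OF w(1)] w not_forward by auto
    qed
  qed
qed

lemma sector_opposite_forward:
  assumes "z \<in> sides" and "forward z"
  shows "sector (opposite z) = sector z + 1"
proof -
  have "sector z \<noteq> 2*n+1"
    using not_forward_at_last assms by blast
  then have "sector z \<in> {1..2*n}"
    using sector_in_sectors[OF assms(1)] by (simp add: sectors_def)
  then show ?thesis
    using boundary_walk assms by simp
qed

lemma sector_opposite_backward:
  assumes "z \<in> sides" and "\<not> forward z"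
  shows "sector (opposite z) + 1 = sector z"
  using sector_opposite_forward[OF opposite_in_sides] assms
  by (simp add: forward_opposite opposite_opposite)

text \<open>Along the side \<open>z\<close> the boundary passes between the sectors \<open>link z\<close> and \<open>link z + 1\<close>.\<close>

definition link :: "nat \<times> bool \<Rightarrow> nat" where
  "link z = min (sector z) (sector (opposite z))"

lemma link_opposite: "z \<in> sides \<Longrightarrow> link (opposite z) = link z"
  by (simp add: link_def opposite_opposite min.commute)

lemma sector_eq_link: "z \<in> sides \<Longrightarrow> sector z = (if forward z then link z else link z + 1)"
  using sector_opposite_forward sector_opposite_backward by (fastforce simp: link_def)

lemma link_eqD:
  assumes "z \<in> sides" and "z' \<in> sides" and "link z = link z'"
  shows "z' = z \<or> z' = opposite z"
proof -
  define rep where "rep u = (if forward u then u else opposite u)" for u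
  have rep: "rep u \<in> sides" "forward (rep u)" "sector (rep u) = link u" if "u \<in> sides" for u
    using that opposite_in_sides[OF that] forward_opposite[OF that] sector_eq_link[OF that]
      sector_eq_link[OF opposite_in_sides[OF that]] link_opposite[OF that]
    by (simp_all add: rep_def)
  have "rep z = rep z'"
    using rep[OF assms(1)] rep[OF assms(2)] assms(3) by (intro side_eqI) simp_all
  moreover have "rep z = z \<or> rep z = opposite z" "rep z' = z' \<or> rep z' = opposite z'"
    by (simp_all add: rep_def)
  ultimately show ?thesis
    using opposite_opposite[OF assms(1)] opposite_opposite[OF assms(2)] by metis
qed

lemma interval_mem_sector:
  assumes "z \<in> sides" and "i < j"
  shows "interval_mem i j ((\<omega> i = \<omega> 1) = snd z) ((\<omega> j \<noteq> \<omega> 1) = snd z) (sector z)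
    \<longleftrightarrow> link z \<in> {i..<j}"
  using sector_eq_link[OF assms(1)] assms(2)
  by (auto simp: interval_mem_def forward_def split: if_splits) (metis Suc_lessI)+

end

section \<open>Ribbons crossing the reversed interval\<close>

lemma links_intersect_iff:
  fixes s\<^sub>1 s\<^sub>2 i j :: nat
  assumes "s\<^sub>1 \<noteq> s\<^sub>2" and "i < j"
  defines "A \<equiv> {s\<^sub>1, s\<^sub>1 + 1, s\<^sub>2, s\<^sub>2 + 1}"
  shows "(Min A < i \<and> i < Max A \<and> Max A \<le> j) \<or> (i \<le> Min A \<and> Min A < j \<and> j < Max A)
    \<longleftrightarrow> (s\<^sub>1 \<in> {i..<j}) \<noteq> (s\<^sub>2 \<in> {i..<j})"
proof -
  have "Min A = min s\<^sub>1 s\<^sub>2" "Max A = max s\<^sub>1 s\<^sub>2 + 1"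
    by (auto simp: A_def min_def max_def)
  then show ?thesis
    using assms(1,2) by (cases "s\<^sub>1 < s\<^sub>2") auto
qed

lemma unit_eq_iff_mult:
  fixes a b :: int
  assumes "\<bar>a\<bar> = 1" and "\<bar>b\<bar> = 1"
  shows "a = b \<longleftrightarrow> a * b = 1" and "a = - b \<longleftrightarrow> a * b = -1"
  using assms by (auto simp: abs_if split: if_splits)

lemma status_swap_iff:
  fixes a b c d a' b' c' d' :: int
  assumes "\<bar>a\<bar> = 1" "\<bar>b\<bar> = 1" "\<bar>c\<bar> = 1" "\<bar>d\<bar> = 1"
    and "\<bar>a'\<bar> = 1" "\<bar>b'\<bar> = 1" "\<bar>c'\<bar> = 1" "\<bar>d'\<bar> = 1"
    and "c * d = a * b"
    and "a' * b' = neg_one_if X * (a * b)" and "c' * d' = neg_one_if X * (c * d)"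
  shows "((a = - b \<and> c = - d) \<and> (a' = b' \<and> c' = d') \<or> (a = b \<and> c = d) \<and> (a' = - b' \<and> c' = - d'))
    \<longleftrightarrow> X"
proof -
  have "\<bar>a * b\<bar> = 1"
    using assms(1,2) by (simp add: abs_mult)
  then show ?thesis
    using assms(9-11) unit_eq_iff_mult[OF assms(1,2)] unit_eq_iff_mult[OF assms(3,4)]
      unit_eq_iff_mult[OF assms(5,6)] unit_eq_iff_mult[OF assms(7,8)]
    by (auto simp: neg_one_if_def abs_if split: if_splits)
qed

context unicellular_fatgraph
begin

lemma opposite_pair:
  "{opposite (h, True), opposite (h, False)} = {(\<epsilon> h, True), (\<epsilon> h, False)}"
  by (auto simp: opposite_def)

lemma ribbon_pair_product:
  "h \<in> {1..2*n} \<Longrightarrow> \<omega> (\<epsilon> h) * \<omega> (\<sigma> (\<epsilon> h)) = \<omega> h * \<omega> (\<sigma> h)"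
  by (drule ribbon_cases) (auto simp: untwisted_ribbon_def twisted_ribbon_def mult.commute)

lemma links_of_pair_neq:
  assumes "h \<in> {1..2*n}"
  shows "link (h, True) \<noteq> link (h, False)"
proof
  assume "link (h, True) = link (h, False)"
  then have "(h, False) = (h, True) \<or> (h, False) = opposite (h, True)"
    using assms by (intro link_eqD) (auto simp: sides_def)
  then show False
    using matching[OF assms] by (auto simp: opposite_def)
qed

lemma links_of_matching_pair:
  assumes "h \<in> {1..2*n}"
  shows "{link (\<epsilon> h, True), link (\<epsilon> h, False)} = {link (h, True), link (h, False)}"
proof -
  have "link ` {(\<epsilon> h, True), (\<epsilon> h, False)} = link ` {opposite (h, True), opposite (h, False)}"
    by (simp only: opposite_pair)
  then show ?thesis
    using assms by (simp add: link_opposite sides_def)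
qed

lemma ribbon_sectors_links:
  assumes "h \<in> {1..2*n}"
  shows "ribbon_sectors \<sigma> {h, \<epsilon> h} =
    {link (h, True), link (h, True) + 1, link (h, False), link (h, False) + 1}"
proof -
  have side: "{sector z, sector (opposite z)} = {link z, link z + 1}" if "z \<in> sides" for z
    using sector_eq_link[OF that] sector_eq_link[OF opposite_in_sides[OF that]]
      forward_opposite[OF that] link_opposite[OF that] by auto
  have "sector ` {opposite (h, True), opposite (h, False)} =
      sector ` {(\<epsilon> h, True), (\<epsilon> h, False)}"
    by (simp only: opposite_pair)
  then have "ribbon_sectors \<sigma> {h, \<epsilon> h} =
      {sector (h, True), sector (opposite (h, True))} \<union>
      {sector (h, False), sector (opposite (h, False))}"
    by (auto simp: ribbon_sectors_def)
  also have "\<dots> = {link (h, True), link (h, True) + 1} \<union> {link (h, False), link (h, False) + 1}"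
    using assms by (subst (1 2) side) (auto simp: sides_def)
  finally show ?thesis
    by auto
qed

lemma intersects_iff_links:
  assumes "h \<in> {1..2*n}" and "i < j"
  shows "intersects \<sigma> {h, \<epsilon> h} i j \<longleftrightarrow>
    (link (h, True) \<in> {i..<j}) \<noteq> (link (h, False) \<in> {i..<j})"
  unfolding intersects_def ribbon_L_def ribbon_R_def ribbon_sectors_links[OF assms(1)]
  by (rule links_intersect_iff[OF links_of_pair_neq[OF assms(1)] assms(2)])

lemma reversal_pair_sign_links:
  assumes "reversal n \<sigma> \<omega> i j \<sigma>' \<omega>' \<tau>" and "h \<in> {1..2*n}"
  shows "\<omega>' (\<tau> h) * \<omega>' (\<sigma>' (\<tau> h)) =
    neg_one_if ((link (h, True) \<in> {i..<j}) \<noteq> (link (h, False) \<in> {i..<j})) * (\<omega> h * \<omega> (\<sigma> h))"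
proof -
  have "i < j" and "(h, True) \<in> sides" and "(h, False) \<in> sides"
    using assms by (simp_all add: reversal_def sides_def)
  then show ?thesis
    using reversal_pair_sign[OF sigma_permutes _ assms(1), of h] orientation_unit
      interval_mem_sector[of "(h, True)" i j] interval_mem_sector[of "(h, False)" i j]
    by simp
qed

lemma ribbon_status_change_iff:
  assumes rev: "reversal n \<sigma> \<omega> i j \<sigma>' \<omega>' \<tau>" and h: "h \<in> {1..2*n}"
  shows "((m_ribbon \<sigma> \<omega> {h, \<epsilon> h} \<and> b_ribbon \<sigma>' \<omega>' (\<tau> ` {h, \<epsilon> h})) \<or>
          (b_ribbon \<sigma> \<omega> {h, \<epsilon> h} \<and> m_ribbon \<sigma>' \<omega>' (\<tau> ` {h, \<epsilon> h})))
    \<longleftrightarrow> (link (h, True) \<in> {i..<j}) \<noteq> (link (h, False) \<in> {i..<j})"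
    (is "_ \<longleftrightarrow> ?X")
proof -
  define y where "y = \<epsilon> h"
  have y: "y \<in> {1..2*n}"
    using matching[OF h] by (simp add: y_def)
  have "?X \<longleftrightarrow> (link (y, True) \<in> {i..<j}) \<noteq> (link (y, False) \<in> {i..<j})"
    using links_of_matching_pair[OF h] by (auto simp: y_def doubleton_eq_iff)
  then have signs: "\<omega>' (\<tau> h) * \<omega>' (\<sigma>' (\<tau> h)) = neg_one_if ?X * (\<omega> h * \<omega> (\<sigma> h))"
      "\<omega>' (\<tau> y) * \<omega>' (\<sigma>' (\<tau> y)) = neg_one_if ?X * (\<omega> y * \<omega> (\<sigma> y))"
    using reversal_pair_sign_links[OF rev h] reversal_pair_sign_links[OF rev y] by simp_all
  have "\<bar>\<omega> s\<bar> = 1" "\<bar>\<omega>' s\<bar> = 1" if "s \<in> sectors n" for s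
    using orientation_unit[OF that] reversal_abs_orientation[OF rev, of s] by auto
  moreover have "\<sigma> x \<in> sectors n" "\<tau> x \<in> sectors n" "\<sigma>' (\<tau> x) \<in> sectors n"
    if "x \<in> sectors n" for x
    using that reversal_maps_sectors[OF sigma_permutes rev] by simp_all
  moreover have "h \<in> sectors n" "y \<in> sectors n"
    using h y by (simp_all add: sectors_def)
  ultimately show ?thesis
    unfolding m_ribbon_def b_ribbon_def y_def[symmetric]
    using status_swap_iff[OF _ _ _ _ _ _ _ _ ribbon_pair_product[OF h, folded y_def] signs]
    by simp
qed

end

theorem lemma2:
  fixes n :: nat and \<sigma> \<gamma> \<epsilon> :: "nat \<Rightarrow> nat" and \<omega> :: "nat \<Rightarrow> int"
    and i j :: nat and \<sigma>' \<tau> :: "nat \<Rightarrow> nat" and \<omega>' :: "nat \<Rightarrow> int" and r :: "nat set"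
  assumes "fatgraph n \<sigma> \<gamma> \<omega> \<epsilon>"
    and "unicellular n \<gamma>"
    and "reversal n \<sigma> \<omega> i j \<sigma>' \<omega>' \<tau>"
    and "r \<in> ribbons n \<epsilon>"
  shows "((m_ribbon \<sigma> \<omega> r \<and> b_ribbon \<sigma>' \<omega>' (\<tau> ` r)) \<or>
          (b_ribbon \<sigma> \<omega> r \<and> m_ribbon \<sigma>' \<omega>' (\<tau> ` r)))
         \<longleftrightarrow> intersects \<sigma> r i j"
proof -
  obtain h where h: "h \<in> {1..2*n}" and r: "r = {h, \<epsilon> h}"
    using assms(4) by (auto simp: ribbons_def)
  then interpret unicellular_fatgraph n \<sigma> \<gamma> \<epsilon> \<omega>
    using assms(1,2) by unfold_locales auto
  have "i < j"
    using assms(3) by (simp add: reversal_def)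
  then show ?thesis
    unfolding r by (simp only: ribbon_status_change_iff[OF assms(3) h] intersects_iff_links[OF h])
qed

end
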